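(* Let $n\ge 2$ be an integer. For $\alpha,\beta\in\{0,1,\ldots,2^n-1\}$ define $f_{\alpha,\beta}:\{0,\ldots,2^n-1\}\to\{0,\ldots,2^n-1\}$ by $f_{\alpha,\beta}(x)=\big((\alpha+x)\bmod 2^n\big)\oplus\big((\beta+x)\bmod 2^n\big)$. Call a finite set $Q$ of pairs $(\alpha,\beta)$ a determining set if for all $x,x'\in\{0,\ldots,2^n-1\}$, the condition $f_{\alpha,\beta}(x)=f_{\alpha,\beta}(x')$ for every $(\alpha,\beta)\in Q$ implies $x\equiv x'\pmod{2^{n-1}}$. Then the minimum cardinality of a determining set is $1$ if $n=2$, and $2$ if $n>2$.
   Context: $\oplus$ denotes bitwise exclusive OR (XOR) of the binary representations of non-negative integers. A determining set is one whose query values $f_{\alpha,\beta}(x)$ recover $x$ modulo $2^{n-1}$ uniquely (the most significant bit of $x$ cannot be recovered in general, since $((\alpha+(x\oplus 2^{n-1}))\bmod 2^n)=((\alpha+x)\bmod 2^n)\oplus 2^{n-1}$). *)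

theory Defs
  imports Main
begin

definition qf :: "nat \<Rightarrow> nat \<Rightarrow> nat \<Rightarrow> nat \<Rightarrow> nat" where
  "qf n \<alpha> \<beta> x = Bit_Operations.xor ((\<alpha> + x) mod 2 ^ n) ((\<beta> + x) mod 2 ^ n)"

definition determining_set :: "nat \<Rightarrow> (nat \<times> nat) set \<Rightarrow> bool" where
  "determining_set n Q \<longleftrightarrow> finite Q \<and> Q \<subseteq> {0..<2 ^ n} \<times> {0..<2 ^ n} \<and>
     (\<forall>x \<in> {0..<2 ^ n}. \<forall>x' \<in> {0..<2 ^ n}.
        (\<forall>(\<alpha>, \<beta>) \<in> Q. qf n \<alpha> \<beta> x = qf n \<alpha> \<beta> x') \<longrightarrow> x mod 2 ^ (n - 1) = x' mod 2 ^ (n - 1))"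

end

theory Submission
  imports Defs
begin

(*
  Upper bound.  Bit k of f_{0,d}(x) is d_k XOR c_k(d,x), where c_k(d,x) is the carry into
  position k of the addition d + x.  Hence equal answers to the query (0,d) mean equal carry
  sequences.  For the two alternating masks d = ...0101 and e = ...1010 (bits below n - 1)
  equal carries for both force equal low n - 1 bits: at the lowest differing bit k the
  carry-majority rule forces d_k = c_k(d,x) and e_k = c_k(e,x), which is impossible at k = 0
  and, at k > 0, forces bit k - 1 of x to equal both d_{k-1} and its negation.  For n = 2 the
  mask e is 0 and the query (0,0) is constant, so one query suffices.

  Lower bound.  The empty set fails (0 and 1 collide).  A single query (a,b) is a shifted
  copy of the query (0,d), d = b - a mod 2^n, and for n >= 3 every such query has a
  collision: 0 and 2^j collide if bit j < 2 of d is zero, otherwise d = 3 mod 4 and 1 and 3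
  collide.
*)

section \<open>Carries of binary addition\<close>

definition carry :: "nat \<Rightarrow> nat \<Rightarrow> nat \<Rightarrow> bool" where
  "carry a b k \<longleftrightarrow> 2 ^ k \<le> take_bit k a + take_bit k b"

lemma carry_div:
  "(take_bit k a + take_bit k b) div 2 ^ k = of_bool (carry a b k)"
proof -
  have "take_bit k a + take_bit k b < 2 * 2 ^ k"
    using take_bit_nat_less_exp[of k a] take_bit_nat_less_exp[of k b] by linarith
  then show ?thesis unfolding carry_def by (auto simp: div_eq_0_iff intro!: div_nat_eqI)
qed

lemma add_div_exp_carry:
  fixes a b :: nat
  shows "(a + b) div 2 ^ k = a div 2 ^ k + b div 2 ^ k + of_bool (carry a b k)"
proof -
  have "a + b = (take_bit k a + take_bit k b) + (a div 2 ^ k + b div 2 ^ k) * 2 ^ k"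
    using div_mult_mod_eq[of a "2 ^ k"] div_mult_mod_eq[of b "2 ^ k"]
    by (simp add: take_bit_eq_mod algebra_simps)
  then have "(a + b) div 2 ^ k = (take_bit k a + take_bit k b) div 2 ^ k + (a div 2 ^ k + b div 2 ^ k)"
    by simp
  then show ?thesis by (simp add: carry_div)
qed

lemma bit_add_carry:
  fixes a b :: nat
  shows "bit (a + b) k \<longleftrightarrow> ((bit a k \<noteq> bit b k) \<noteq> carry a b k)"
  unfolding bit_iff_odd add_div_exp_carry by (cases "carry a b k") auto

lemma carry_0: "\<not> carry a b 0"
  unfolding carry_def by simp

lemma carry_Suc:
  "carry a b (Suc k) \<longleftrightarrow>
     (bit a k \<and> bit b k) \<or> (bit a k \<and> carry a b k) \<or> (bit b k \<and> carry a b k)"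
proof -
  define A B C :: nat
    where "A = of_bool (bit a k)" and "B = of_bool (bit b k)" and "C = of_bool (carry a b k)"
  define r where "r = (take_bit k a + take_bit k b) mod 2 ^ k"
  have "take_bit k a + take_bit k b = 2 ^ k * C + r"
    using div_mult_mod_eq[of "take_bit k a + take_bit k b" "2 ^ k"]
    unfolding r_def C_def carry_div by (simp add: mult.commute)
  then have sum: "take_bit (Suc k) a + take_bit (Suc k) b = 2 ^ k * (A + B + C) + r"
    unfolding A_def B_def by (simp add: take_bit_Suc_from_most distrib_left)
  have r: "r < 2 ^ k" unfolding r_def by simp
  have "carry a b (Suc k) \<longleftrightarrow> 2 * 2 ^ k \<le> 2 ^ k * (A + B + C) + r"
    unfolding carry_def sum by simp
  also have "\<dots> \<longleftrightarrow> 2 \<le> A + B + C"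
  proof
    assume "2 * 2 ^ k \<le> 2 ^ k * (A + B + C) + r"
    then have "2 ^ k * 2 < 2 ^ k * (A + B + C + 1)" using r by (simp add: algebra_simps)
    then show "2 \<le> A + B + C" by (subst (asm) mult_less_cancel1) simp
  next
    assume "2 \<le> A + B + C"
    then have "2 ^ k * 2 \<le> 2 ^ k * (A + B + C)" by (rule mult_le_mono2)
    then show "2 * 2 ^ k \<le> 2 ^ k * (A + B + C) + r" by linarith
  qed
  finally show ?thesis
    unfolding A_def B_def C_def by (cases "bit a k"; cases "bit b k"; cases "carry a b k") simp_all
qed

lemma carry_cong_take_bit:
  "take_bit k b = take_bit k b' \<Longrightarrow> carry a b k = carry a b' k"
  unfolding carry_def by simp

text \<open>If flipping bit \<open>k\<close> of one summand changes neither the incoming nor the outgoing carry,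
  the other two inputs of the majority must agree.\<close>
lemma carry_flip_forces:
  assumes "bit b k \<noteq> bit b' k" and "carry a b k = carry a b' k"
    and "carry a b (Suc k) = carry a b' (Suc k)"
  shows "bit a k = carry a b k"
  using assms unfolding carry_Suc by auto

lemma carry_Suc_minority:
  "carry a b (Suc k) \<noteq> bit a k \<Longrightarrow> bit b k = carry a b (Suc k)"
  unfolding carry_Suc by auto

section \<open>Two queries determine \<open>x\<close> modulo \<open>2^(n-1)\<close>\<close>

lemma bit_qf_zero:
  "k < n \<Longrightarrow> bit (qf n 0 d x) k \<longleftrightarrow> (bit d k \<noteq> carry d x k)"
  unfolding qf_def
  by (simp add: bit_xor_iff bit_take_bit_iff bit_add_carry flip: take_bit_eq_mod) auto

lemma carry_eq_if_qf_eq: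
  "qf n 0 d x = qf n 0 d x' \<Longrightarrow> k < n \<Longrightarrow> carry d x k = carry d x' k"
  using bit_qf_zero[of k n d x] bit_qf_zero[of k n d x'] by auto

text \<open>The alternating masks \<open>\<dots>0101\<close> and \<open>\<dots>1010\<close> with \<open>m\<close> bits.\<close>
definition even_mask :: "nat \<Rightarrow> nat" where
  "even_mask m = horner_sum of_bool 2 (map even [0..<m])"

definition odd_mask :: "nat \<Rightarrow> nat" where
  "odd_mask m = horner_sum of_bool 2 (map odd [0..<m])"

lemma bit_even_mask: "bit (even_mask m) i \<longleftrightarrow> i < m \<and> even i"
  unfolding even_mask_def by (auto simp: bit_horner_sum_bit_iff)

lemma bit_odd_mask: "bit (odd_mask m) i \<longleftrightarrow> i < m \<and> odd i"
  unfolding odd_mask_def by (auto simp: bit_horner_sum_bit_iff)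

lemma even_mask_less: "even_mask m < 2 ^ m"
  unfolding even_mask_def using horner_sum_of_bool_2_less[of "map even [0..<m]"] by simp

lemma odd_mask_less: "odd_mask m < 2 ^ m"
  unfolding odd_mask_def using horner_sum_of_bool_2_less[of "map odd [0..<m]"] by simp

text \<open>Induction on the number of agreeing low bits; a first disagreement at bit \<open>k\<close> is
  refuted by the carry-majority rule.\<close>
lemma alternating_queries_determine:
  assumes "m < n"
    and qd: "qf n 0 (even_mask m) x = qf n 0 (even_mask m) x'"
    and qe: "qf n 0 (odd_mask m) x = qf n 0 (odd_mask m) x'"
  shows "take_bit m x = take_bit m x'"
proof -
  define d e where "d = even_mask m" and "e = odd_mask m"
  have bit_d: "bit d i \<longleftrightarrow> i < m \<and> even i" and bit_e: "bit e i \<longleftrightarrow> i < m \<and> odd i" for i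
    unfolding d_def e_def by (simp_all add: bit_even_mask bit_odd_mask)
  have same_bit: "bit x k = bit x' k"
    if k: "k < m" and low: "take_bit k x = take_bit k x'" for k
  proof (rule ccontr)
    assume flip: "bit x k \<noteq> bit x' k"
    have "Suc k < n" using k \<open>m < n\<close> by simp
    then have "bit d k = carry d x k" "bit e k = carry e x k"
      using carry_flip_forces[OF flip carry_cong_take_bit[OF low]] qd qe carry_eq_if_qf_eq
      unfolding d_def e_def by blast+
    show False
    proof (cases k)
      case 0
      then show False using \<open>bit d k = carry d x k\<close> bit_d k carry_0 by simp
    next
      case (Suc j)
      have "bit x j = carry d x k"
        using carry_Suc_minority[of d x j] \<open>bit d k = carry d x k\<close> bit_d k Suc by auto
      moreover have "bit x j = carry e x k"
        using carry_Suc_minority[of e x j] \<open>bit e k = carry e x k\<close> bit_e k Suc by auto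
      ultimately show False
        using \<open>bit d k = carry d x k\<close> \<open>bit e k = carry e x k\<close> bit_d bit_e k Suc by auto
    qed
  qed
  have "k \<le> m \<Longrightarrow> take_bit k x = take_bit k x'" for k
  proof (induction k)
    case (Suc k)
    then show ?case using same_bit[of k] by (simp add: take_bit_Suc_from_most)
  qed simp
  then show ?thesis by simp
qed

lemma determining_setI:
  assumes "finite Q" and "\<And>\<alpha> \<beta>. (\<alpha>, \<beta>) \<in> Q \<Longrightarrow> \<alpha> < 2 ^ n \<and> \<beta> < 2 ^ n"
    and determine: "\<And>x x'. x < 2 ^ n \<Longrightarrow> x' < 2 ^ n \<Longrightarrow>
      (\<And>\<alpha> \<beta>. (\<alpha>, \<beta>) \<in> Q \<Longrightarrow> qf n \<alpha> \<beta> x = qf n \<alpha> \<beta> x') \<Longrightarrow>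
      x mod 2 ^ (n - 1) = x' mod 2 ^ (n - 1)"
  shows "determining_set n Q"
  unfolding determining_set_def
proof (intro conjI ballI impI)
  show "finite Q" by fact
  show "Q \<subseteq> {0..<2 ^ n} \<times> {0..<2 ^ n}" using assms(2) by auto
next
  fix x x'
  assume "x \<in> {0..<2 ^ n}" "x' \<in> {0..<2 ^ n}"
    and "\<forall>(\<alpha>, \<beta>) \<in> Q. qf n \<alpha> \<beta> x = qf n \<alpha> \<beta> x'"
  then show "x mod 2 ^ (n - 1) = x' mod 2 ^ (n - 1)" by (intro determine) auto
qed

lemma determining_setD:
  assumes det: "determining_set n Q" and "x < 2 ^ n" "x' < 2 ^ n"
    and agree: "\<And>\<alpha> \<beta>. (\<alpha>, \<beta>) \<in> Q \<Longrightarrow> qf n \<alpha> \<beta> x = qf n \<alpha> \<beta> x'"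
  shows "x mod 2 ^ (n - 1) = x' mod 2 ^ (n - 1)"
proof -
  have "\<forall>(\<alpha>, \<beta>) \<in> Q. qf n \<alpha> \<beta> x = qf n \<alpha> \<beta> x'" using agree by auto
  moreover have "x \<in> {0..<2 ^ n}" "x' \<in> {0..<2 ^ n}" using assms(2,3) by simp_all
  ultimately show ?thesis using det unfolding determining_set_def by blast
qed

section \<open>Determining sets of size one and two\<close>

text \<open>A diagonal query \<open>(\<alpha>, \<alpha>)\<close> always answers \<open>0\<close>, so it can be dropped.\<close>
lemma determining_set_drop_diagonal:
  assumes det: "determining_set n (insert (\<alpha>, \<alpha>) Q)"
  shows "determining_set n Q"
proof (rule determining_setI)
  show "finite Q" using det unfolding determining_set_def by simp
  show "\<beta> < 2 ^ n \<and> \<gamma> < 2 ^ n" if "(\<beta>, \<gamma>) \<in> Q" for \<beta> \<gamma>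
    using det that unfolding determining_set_def by auto
  fix x x'
  assume "x < 2 ^ n" "x' < 2 ^ n" and agree: "\<And>\<beta> \<gamma>. (\<beta>, \<gamma>) \<in> Q \<Longrightarrow> qf n \<beta> \<gamma> x = qf n \<beta> \<gamma> x'"
  have diagonal: "qf n \<alpha> \<alpha> y = 0" for y by (simp add: qf_def)
  show "x mod 2 ^ (n - 1) = x' mod 2 ^ (n - 1)"
  proof (rule determining_setD[OF det \<open>x < 2 ^ n\<close> \<open>x' < 2 ^ n\<close>])
    fix \<beta> \<gamma>
    assume "(\<beta>, \<gamma>) \<in> insert (\<alpha>, \<alpha>) Q"
    then show "qf n \<beta> \<gamma> x = qf n \<beta> \<gamma> x'" using agree diagonal by auto
  qed
qed

lemma alternating_determining_set:
  assumes "2 \<le> n"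
  shows "determining_set n {(0, even_mask (n - 1)), (0, odd_mask (n - 1))}"
proof (rule determining_setI)
  have "(2::nat) ^ n = 2 * 2 ^ (n - 1)" using assms by (simp flip: power_Suc)
  then have "even_mask (n - 1) < 2 ^ n" "odd_mask (n - 1) < 2 ^ n"
    using even_mask_less[of "n - 1"] odd_mask_less[of "n - 1"] by linarith+
  then show "\<alpha> < 2 ^ n \<and> \<beta> < 2 ^ n"
    if "(\<alpha>, \<beta>) \<in> {(0, even_mask (n - 1)), (0, odd_mask (n - 1))}" for \<alpha> \<beta> :: nat
    using that by auto
  fix x x'
  assume "\<And>\<alpha> \<beta>. (\<alpha>, \<beta>) \<in> {(0, even_mask (n - 1)), (0, odd_mask (n - 1))} \<Longrightarrow>
    qf n \<alpha> \<beta> x = qf n \<alpha> \<beta> x'"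
  then have "take_bit (n - 1) x = take_bit (n - 1) x'"
    using assms by (intro alternating_queries_determine) auto
  then show "x mod 2 ^ (n - 1) = x' mod 2 ^ (n - 1)" by (simp add: take_bit_eq_mod)
qed simp

text \<open>The two alternating queries are distinct: only the even mask has bit \<open>0\<close> set.\<close>
lemma card_alternating_queries:
  assumes "2 \<le> n"
  shows "card {(0::nat, even_mask (n - 1)), (0, odd_mask (n - 1))} = 2"
proof -
  have "even_mask (n - 1) \<noteq> odd_mask (n - 1)"
    using bit_even_mask[of "n - 1" 0] bit_odd_mask[of "n - 1" 0] assms by auto
  then show ?thesis by simp
qed

text \<open>For \<open>n = 2\<close> the odd mask is \<open>0\<close>, so the single query \<open>(0, 1)\<close> suffices.\<close>
lemma determining_set_2: "determining_set 2 {(0, 1)}"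
proof -
  have "even_mask 1 = 1" "odd_mask 1 = 0"
    by (simp_all add: even_mask_def odd_mask_def)
  then have "determining_set 2 (insert (0, 0) {(0, 1)})"
    using alternating_determining_set[of 2] by (simp add: insert_commute)
  then show ?thesis by (rule determining_set_drop_diagonal)
qed

section \<open>No determining set of size zero or one\<close>

text \<open>Without queries, \<open>0\<close> and \<open>1\<close> are not distinguished.\<close>
lemma empty_not_determining_set:
  assumes "2 \<le> n"
  shows "\<not> determining_set n {}"
proof
  assume det: "determining_set n {}"
  have two: "(2::nat) \<le> 2 ^ (n - 1)" "(2::nat) ^ n = 2 * 2 ^ (n - 1)"
    using assms by (simp_all add: self_le_power flip: power_Suc)
  then have "(1::nat) < 2 ^ n" by linarith
  have "(1::nat) mod 2 ^ (n - 1) = 1" using two by (intro mod_less) linarith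
  with \<open>1 < 2 ^ n\<close> have "(0::nat) mod 2 ^ (n - 1) = 1 mod 2 ^ (n - 1)"
    using determining_setD[OF det, of 0 1] by simp
  then show False using \<open>(1::nat) mod 2 ^ (n - 1) = 1\<close> by simp
qed

lemma qf_shift:
  assumes "\<alpha> < 2 ^ n"
  shows "qf n \<alpha> \<beta> x = qf n 0 ((\<beta> + 2 ^ n - \<alpha>) mod 2 ^ n) ((\<alpha> + x) mod 2 ^ n)"
proof -
  have "((\<beta> + 2 ^ n - \<alpha>) mod 2 ^ n + (\<alpha> + x) mod 2 ^ n) mod 2 ^ n
      = (\<beta> + 2 ^ n - \<alpha> + (\<alpha> + x)) mod 2 ^ n"
    by (simp add: mod_add_left_eq mod_add_right_eq)
  also have "\<beta> + 2 ^ n - \<alpha> + (\<alpha> + x) = (\<beta> + x) + 2 ^ n" using assms by simp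
  finally show ?thesis unfolding qf_def by simp
qed

lemma qf_zero_collision_zero_bit:
  assumes "d < 2 ^ n" "j < n" "\<not> bit d j"
  shows "qf n 0 d (2 ^ j) = qf n 0 d 0"
proof -
  have "and d (2 ^ j) = 0"
    using assms(3) by (intro bit_eqI) (auto simp: bit_and_iff bit_exp_iff)
  then have "d + 2 ^ j = xor d (2 ^ j)" by (rule disjunctive_add_eq_xor)
  moreover have "take_bit n d = d" "take_bit n (2 ^ j) = (2::nat) ^ j"
    using assms(1,2) by (simp_all add: take_bit_nat_eq_self_iff)
  ultimately have "(d + 2 ^ j) mod 2 ^ n = xor d (2 ^ j)"
    by (simp flip: take_bit_eq_mod)
  then show ?thesis
    using assms(1,2) unfolding qf_def by (simp add: xor.commute xor.left_commute)
qed

lemma low_bits_mod_4: "(d::nat) mod 4 = 3 \<longleftrightarrow> bit d 0 \<and> bit d 1"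
proof -
  have "d mod 4 = take_bit 2 d" by (simp add: take_bit_eq_mod)
  also have "\<dots> = of_bool (bit d 0) + 2 * of_bool (bit d 1)"
    by (simp add: take_bit_Suc_from_most numeral_2_eq_2)
  finally show ?thesis by auto
qed

text \<open>Numbers below \<open>4\<close> and multiples of \<open>4\<close> have disjoint bits, so XOR is addition.\<close>
lemma xor_small_multiple_of_4:
  fixes a c :: nat
  assumes "4 dvd c" "a < 4"
  shows "xor a c = a + c"
proof -
  have "bit a i \<Longrightarrow> i < 2" for i
    using assms(2) bit_take_bit_iff[of 2 a i] by (simp add: take_bit_eq_mod)
  moreover have "bit c i \<Longrightarrow> \<not> i < 2" for i
    using assms(1) bit_take_bit_iff[of 2 c i] by (auto simp add: take_bit_eq_mod)
  ultimately have "and a c = 0"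
    by (intro bit_eqI) (auto simp: bit_and_iff)
  then show ?thesis by (simp add: disjunctive_add_eq_xor)
qed

text \<open>If the two lowest bits of \<open>d\<close> are set, then \<open>1\<close> and \<open>3\<close> collide: \<open>1 + d\<close> is a multiple
  \<open>c\<close> of \<open>4\<close> and \<open>1 XOR c = 3 XOR (c + 2)\<close>.\<close>
lemma qf_zero_collision_low_ones:
  assumes "2 \<le> n" "d mod 4 = 3"
  shows "qf n 0 d 3 = qf n 0 d 1"
proof -
  define N :: nat where "N = 2 ^ n"
  define c where "c = (d + 1) mod N"
  have "(4::nat) dvd N" unfolding N_def using assms(1) le_imp_power_dvd[of 2 n 2] by simp
  moreover have "4 dvd d + 1" using assms(2) by presburger
  ultimately have c4: "4 dvd c" unfolding c_def by (simp add: dvd_mod)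
  have "c < N" unfolding c_def N_def by simp
  with c4 \<open>4 dvd N\<close> have "c + 2 < N" by (auto elim!: dvdE)
  have "d + 3 = (d + 1) + 2" by simp
  then have "(d + 3) mod N = ((d + 1) + 2) mod N" by (simp only:)
  also have "\<dots> = (c + 2) mod N" unfolding c_def by (rule mod_add_left_eq[symmetric])
  finally have "(d + 3) mod N = c + 2" using \<open>c + 2 < N\<close> by simp
  moreover have "(3::nat) < N" "(1::nat) < N"
    using dvd_imp_le[OF \<open>4 dvd N\<close>] unfolding N_def by simp_all
  moreover have "xor 3 (c + 2) = xor 1 c"
  proof -
    have "xor 2 c = c + 2" "xor 1 c = 1 + c" using c4 xor_small_multiple_of_4 by simp_all
    then have "xor 3 (c + 2) = xor 3 (xor 2 c)" by simp
    also have "\<dots> = xor 1 c" by (simp flip: xor.assoc)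
    finally show ?thesis .
  qed
  ultimately show ?thesis
    using assms(1) unfolding qf_def N_def c_def by (simp add: add.commute)
qed

lemma qf_zero_collision:
  assumes "3 \<le> n" "d < 2 ^ n"
  obtains y y' where "y < 2 ^ n" "y' < 2 ^ n" "y mod 2 ^ (n - 1) \<noteq> y' mod 2 ^ (n - 1)"
    "qf n 0 d y = qf n 0 d y'"
proof -
  have "(4::nat) \<le> 2 ^ (n - 1)" "(2::nat) ^ n = 2 * 2 ^ (n - 1)"
    using assms(1) power_increasing[of 2 "n - 1" "2::nat"] by (simp_all flip: power_Suc)
  then have small: "(y::nat) < 4 \<Longrightarrow> y mod 2 ^ (n - 1) = y \<and> y < 2 ^ n" for y by simp
  consider "\<not> bit d 0" | "\<not> bit d 1" | "d mod 4 = 3"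
    using low_bits_mod_4 by blast
  then show ?thesis
  proof cases
    case 1
    then show ?thesis
      using that[of "2 ^ 0" 0] qf_zero_collision_zero_bit[OF assms(2), of 0] assms(1) small[of 1] small[of 0] by simp
  next
    case 2
    then show ?thesis
      using that[of "2 ^ 1" 0] qf_zero_collision_zero_bit[OF assms(2), of 1] assms(1) small[of 2] small[of 0] by simp
  next
    case 3
    then show ?thesis
      using that[of 3 1] qf_zero_collision_low_ones assms(1) small[of 3] small[of 1] by simp
  qed
qed

text \<open>For \<open>n \<ge> 3\<close> no single query determines \<open>x\<close> modulo \<open>2^(n-1)\<close>: shift a collision of the
  corresponding query with \<open>\<alpha> = 0\<close> back by \<open>\<alpha>\<close>.\<close>
lemma singleton_not_determining_set:
  assumes "3 \<le> n"
  shows "\<not> determining_set n {(\<alpha>, \<beta>)}"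
proof
  assume det: "determining_set n {(\<alpha>, \<beta>)}"
  then have \<alpha>: "\<alpha> < 2 ^ n" unfolding determining_set_def by simp
  define d where "d = (\<beta> + 2 ^ n - \<alpha>) mod 2 ^ n"
  have "d < 2 ^ n" unfolding d_def by simp
  with assms obtain y y' where y: "y < 2 ^ n" "y' < 2 ^ n"
    and ne: "y mod 2 ^ (n - 1) \<noteq> y' mod 2 ^ (n - 1)" and eq: "qf n 0 d y = qf n 0 d y'"
    by (rule qf_zero_collision)
  define x x' where "x = (y + 2 ^ n - \<alpha>) mod 2 ^ n" and "x' = (y' + 2 ^ n - \<alpha>) mod 2 ^ n"
  have unshift: "(\<alpha> + (z + 2 ^ n - \<alpha>) mod 2 ^ n) mod 2 ^ n = z" if "z < 2 ^ n" for z
  proof -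
    have "(\<alpha> + (z + 2 ^ n - \<alpha>) mod 2 ^ n) mod 2 ^ n = (z + 2 ^ n) mod 2 ^ n"
      using \<alpha> by (simp add: mod_add_right_eq)
    then show ?thesis using that by simp
  qed
  have "qf n \<alpha> \<beta> x = qf n \<alpha> \<beta> x'"
    using qf_shift[OF \<alpha>] unshift y eq unfolding d_def x_def x'_def by simp
  moreover have "x mod 2 ^ (n - 1) \<noteq> x' mod 2 ^ (n - 1)"
  proof
    assume "x mod 2 ^ (n - 1) = x' mod 2 ^ (n - 1)"
    then have "(\<alpha> + x) mod 2 ^ (n - 1) = (\<alpha> + x') mod 2 ^ (n - 1)"
      using mod_add_right_eq[of \<alpha> x "2 ^ (n - 1)"] mod_add_right_eq[of \<alpha> x' "2 ^ (n - 1)"] by simp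
    moreover have "(2::nat) ^ (n - 1) dvd 2 ^ n" by (simp add: le_imp_power_dvd)
    ultimately have "((\<alpha> + x) mod 2 ^ n) mod 2 ^ (n - 1) = ((\<alpha> + x') mod 2 ^ n) mod 2 ^ (n - 1)"
      by (simp add: mod_mod_cancel)
    then show False using ne unshift y unfolding x_def x'_def by simp
  qed
  moreover have "x < 2 ^ n" "x' < 2 ^ n" unfolding x_def x'_def by simp_all
  ultimately show False using determining_setD[OF det] by blast
qed

theorem proposition1:
  fixes n :: nat
  assumes "n \<ge> 2"
  shows "(LEAST k. \<exists>Q. determining_set n Q \<and> card Q = k) = (if n = 2 then 1 else 2)"
proof (rule Least_equality)
  show "\<exists>Q. determining_set n Q \<and> card Q = (if n = 2 then 1 else 2)"
    using determining_set_2 alternating_determining_set[OF assms] card_alternating_queries[OF assms]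
    by (cases "n = 2") auto
next
  fix k
  assume "\<exists>Q. determining_set n Q \<and> card Q = k"
  then obtain Q where det: "determining_set n Q" and k: "card Q = k" by blast
  have "finite Q" using det unfolding determining_set_def by simp
  moreover have "Q \<noteq> {}" using det empty_not_determining_set[OF assms] by blast
  ultimately have "k \<noteq> 0" using k[symmetric] by simp
  moreover have "k \<noteq> 1" if "n \<noteq> 2"
  proof
    assume "k = 1"
    then obtain p where "Q = {p}" using k card_1_singletonE[of Q] by blast
    then show False
      using det singleton_not_determining_set[of n "fst p" "snd p"] that assms by simp
  qed
  ultimately show "(if n = 2 then 1 else 2) \<le> k" by auto
qed

end
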